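(* Let $\{a_n\}_{n\ge1}$ be the off-diagonal parameters of Example 5.1 (with $b_n=0$), and set $a_0=1$. For $x_0\in(-1,1)$ and $\theta_0\in\mathbb{R}$ let $u_n=u_n(x_0,\theta_0)$, $n\ge0$, be the solution of $a_nu_{n+1}-x_0u_n+a_{n-1}u_{n-1}=0$ ($n\ge1$) with $u_0=\cos\theta_0$, $u_1=\sin\theta_0$. Then for every compact $K\subset(-1,1)$ there is $C<\infty$ such that $|u_n(x_0,\theta_0)|\le C$ for all $x_0\in K$, all $\theta_0\in\mathbb{R}$ and all $n\ge0$.
   Context: Example 5.1: partition $\{1,2,\dots\}$ into successive consecutive blocks $A_1,B_1,C_1,D_1,A_2,B_2,\dots$ with $\#A_j=3^{j^2}$, $\#C_j=2^{j^2}$, $\#B_j=\#D_j=j^6-1$. $a_n=1$ for $n\in A_j$, $a_n=\tfrac12$ for $n\in C_j$; if $s$ is the last index of $A_j$ then $a_{s+i}=2^{-i/j^6}$ for $1\le i\le j^6-1$ (indices of $B_j$), and if $t$ is the last index of $C_j$ then $a_{t+i}=2^{-1+i/j^6}$ for $1\le i\le j^6-1$ (indices of $D_j$). *)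

theory Defs
  imports Complex_Main
begin

(* Example 5.1.  Block j (j >= 1) consists of A_j, B_j, C_j, D_j (in this order),
   with #A_j = 3^(j^2), #B_j = #D_j = j^6 - 1, #C_j = 2^(j^2). *)

definition blen :: "nat \<Rightarrow> nat" where
  "blen j = 3 ^ (j^2) + (j^6 - 1) + 2 ^ (j^2) + (j^6 - 1)"

(* first index of block j (j >= 1); indices start at 1 *)
definition bstart :: "nat \<Rightarrow> nat" where
  "bstart j = 1 + (\<Sum>i = 1..<j. blen i)"

definition blk :: "nat \<Rightarrow> nat" where
  "blk n = (LEAST j. n < bstart (Suc j))"

definition ex_a :: "nat \<Rightarrow> real" where
  "ex_a n =
    (if n = 0 then 1 else
     (let j = blk n; m = n - bstart j;
          nA = 3 ^ (j^2); nB = j^6 - 1; nC = 2 ^ (j^2) in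
      if m < nA then 1
      else if m < nA + nB then 2 powr (- real (m - nA + 1) / real (j^6))
      else if m < nA + nB + nC then 1/2
      else 2 powr (-1 + real (m - (nA + nB + nC) + 1) / real (j^6))))"

(* solution of a_n u_(n+1) - x u_n + a_(n-1) u_(n-1) = 0 (n >= 1),
   u_0 = cos \<theta>, u_1 = sin \<theta>  (a_n > 0, so this is the unique solution) *)
fun ex_u :: "real \<Rightarrow> real \<Rightarrow> nat \<Rightarrow> real" where
  "ex_u x \<theta> 0 = cos \<theta>"
| "ex_u x \<theta> (Suc 0) = sin \<theta>"
| "ex_u x \<theta> (Suc (Suc n)) =
     (x * ex_u x \<theta> (Suc n) - ex_a n * ex_u x \<theta> n) / ex_a (Suc n)"

end

theory Submission
  imports Defs "HOL-Analysis.Analysis"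
begin

(* Part 1 proves this for every coefficient sequence a_n in [1/2,1] whose increments tend to 0
   and whose variation q_n (coef_variation: squared increments plus the second difference of
   a_n^2) is summable.  For a constant coefficient the energy a^2(v^2+w^2) - x a v w of two
   consecutive values is conserved and, for |x| <= r < 1, comparable to v^2+w^2.  Adding a
   first-order correction and normalising by sqrt (4a^2 - x^2) gives a Lyapunov function lyap
   with lyap_{n+1} <= (1 + C q_n) lyap_n as soon as |a_{n+1} - a_n| is small (lyap_step); the
   product of these factors is bounded by exp (C sum q_n) (product_growth_bound).

   Part 2 checks the hypotheses for Example 5.1: a_n = 2^(-e_n), where on block j the exponent
   e_n follows a piecewise linear profile with values in [0,1] and slopes +-1/j^6.  The variation
   q_n is dominated by a weight built from the slopes and their jumps, whose sum over block j is
   at most 10/j^6; hence it is summable, and the slopes tend to 0. *)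

(* The energy of a pair (v, w) of consecutive values of a solution: for constant coefficient a
   it is conserved by the recurrence a w' = x w - a v. *)
definition jac_energy :: "real \<Rightarrow> real \<Rightarrow> real \<Rightarrow> real \<Rightarrow> real" where
  "jac_energy x a v w = a^2 * (w^2 + v^2) - x * a * w * v"

(* Coefficient of the correction term that compensates, to first order, the change of the
   coefficient from a to b. *)
definition energy_corr :: "real \<Rightarrow> real \<Rightarrow> real \<Rightarrow> real" where
  "energy_corr x a b = (b^2 - a^2) * a^2 / (4*a^2 - x^2)"

definition mod_energy :: "real \<Rightarrow> real \<Rightarrow> real \<Rightarrow> real \<Rightarrow> real \<Rightarrow> real" where
  "mod_energy x a b v w = jac_energy x a v w - energy_corr x a b * (v^2 - w^2)"

(* The Lyapunov function: the corrected energy normalised by sqrt (4a^2 - x^2), the size of the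
   oscillation for the frozen recurrence. *)
definition lyap :: "real \<Rightarrow> real \<Rightarrow> real \<Rightarrow> real \<Rightarrow> real \<Rightarrow> real" where
  "lyap x a b v w = mod_energy x a b v w / sqrt (4*a^2 - x^2)"

(* How much three consecutive coefficients deviate from a constant: squares of increments and
   the second difference of the squares.  Its summability is the hypothesis of the main bound. *)
definition coef_variation :: "real \<Rightarrow> real \<Rightarrow> real \<Rightarrow> real" where
  "coef_variation a0 a1 a2 =
     (a1 - a0)^2 + \<bar>a1 - a0\<bar> * \<bar>a2 - a1\<bar> + \<bar>(a1^2 - a0^2) - (a2^2 - a1^2)\<bar>"

lemma energy_step:
  assumes "a1 * w2 = x*w1 - a0*w0"
  shows "jac_energy x a1 w1 w2 = jac_energy x a0 w0 w1 + (a1^2 - a0^2) * w1^2"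
  using assms unfolding jac_energy_def by algebra

(* The 'virial' identity of the frozen recurrence, expressing (4a^2 - x^2) w1^2 through the
   energy, a telescoping term and a cross term that is small when a1 is close to a0. *)
lemma energy_frozen:
  assumes "a1 * w2 = x*w1 - a0*w0"
  shows "(4*a0^2 - x^2) * w1^2 = 2 * jac_energy x a0 w0 w1
     + a0^2 * ((w1^2 - w2^2) - (w0^2 - w1^2))
     + ((a0-a1)*w2) * (2*x*w1 - 2*a0*w0 + (a0-a1)*w2)"
  using assms unfolding jac_energy_def by algebra

(* The corrected energy is multiplied by 1 + 2(a1^2 - a0^2)/(4a0^2 - x^2) up to three error terms,
   each of second order in the variation of the coefficients. *)
lemma mod_energy_step:
  assumes rec: "a1 * w2 = x*w1 - a0*w0" and P0: "4*a0^2 - x^2 \<noteq> 0"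
  shows "mod_energy x a1 a2 w1 w2 =
       (1 + 2*(a1^2-a0^2)/(4*a0^2 - x^2)) * mod_energy x a0 a1 w0 w1
     + (2*(a1^2-a0^2)/(4*a0^2 - x^2)) * energy_corr x a0 a1 * (w0^2 - w1^2)
     + (energy_corr x a0 a1 - energy_corr x a1 a2) * (w1^2 - w2^2)
     + ((a1^2-a0^2)/(4*a0^2 - x^2)) * (((a0-a1)*w2) * (2*x*w1 - 2*a0*w0 + (a0-a1)*w2))"
proof -
  define P where "P = 4*a0^2 - x^2"
  define \<delta> where "\<delta> = a1^2 - a0^2"
  define \<omega> where "\<omega> = ((a0-a1)*w2) * (2*x*w1 - 2*a0*w0 + (a0-a1)*w2)"
  have E: "energy_corr x a0 a1 = \<delta> * a0^2 / P" by (simp add: energy_corr_def \<delta>_def P_def)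
  have K: "jac_energy x a1 w1 w2 = jac_energy x a0 w0 w1 + \<delta> * w1^2"
    using energy_step[OF rec] \<delta>_def by simp
  have F: "P * w1^2 = 2 * jac_energy x a0 w0 w1 + a0^2 * ((w1^2 - w2^2) - (w0^2 - w1^2)) + \<omega>"
    using energy_frozen[OF rec] P_def \<omega>_def by simp
  have "\<delta> * w1^2 = (\<delta>/P) * (P * w1^2)" using P0 P_def by simp
  also have "\<dots> = (\<delta>/P) * (2 * jac_energy x a0 w0 w1 + a0^2 * ((w1^2 - w2^2) - (w0^2 - w1^2)) + \<omega>)"
    using F by simp
  finally have "\<delta> * w1^2 = 2*(\<delta>/P) * jac_energy x a0 w0 w1
      + energy_corr x a0 a1 * ((w1^2 - w2^2) - (w0^2 - w1^2)) + (\<delta>/P) * \<omega>"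
    unfolding E by (simp add: algebra_simps)
  then show ?thesis
    unfolding mod_energy_def K P_def[symmetric] \<delta>_def[symmetric] \<omega>_def[symmetric]
    by (simp add: algebra_simps diff_divide_distrib add_divide_distrib)
qed

(* Difference of two consecutive correction coefficients, written so that each summand is of
   second order (A, B, C stand for a0^2, a1^2, a2^2 and X for x^2). *)
lemma corr_difference:
  fixes A B C X P Q :: real
  assumes "P \<noteq> 0" "Q \<noteq> 0" "P = 4*A - X" "Q = 4*B - X"
  shows "(B-A)*A/P - (C-B)*B/Q = ((B-A)-(C-B))*(A/P) + (C-B)*(X*(B-A)/(P*Q))"
proof -
  have "(B-A)*A/P - (C-B)*B/Q - (((B-A)-(C-B))*(A/P) + (C-B)*(X*(B-A)/(P*Q)))
      = (C-B)*(A*Q - B*P - X*(B-A))/(P*Q)"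
    using assms(1,2) by (simp add: field_simps)
  also have "A*Q - B*P - X*(B-A) = 0" by (simp add: assms(3,4) algebra_simps)
  finally show ?thesis by simp
qed

(* If s^2 = 1 + y then 1 + y/2 <= s (1 + y^2); used to absorb the first-order growth factor into
   the change of normalisation sqrt (4a0^2 - x^2) -> sqrt (4a1^2 - x^2). *)
lemma half_sum_le:
  fixes s :: real assumes "s \<ge> 1/2"
  shows "(1 + s^2)/2 \<le> s * (1 + (s^2 - 1)^2)"
proof -
  have "(s+1)^2 \<ge> (3/2)^2" using assms by (intro power_mono) auto
  hence "s*(s+1)^2 \<ge> (1/2)*(3/2)^2" using assms by (intro mult_mono) auto
  hence h: "s*(s+1)^2 - 1/2 \<ge> 0" by (simp add: power2_eq_square)
  have "s * (1 + (s^2 - 1)^2) - (1 + s^2)/2 = (s-1)^2 * (s*(s+1)^2 - 1/2)"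
    by (simp add: power2_eq_square algebra_simps)
  also have "\<dots> \<ge> 0" using h by simp
  finally show ?thesis by simp
qed

lemma abs_mult_le_half_sumsq: "\<bar>v * w\<bar> \<le> (v^2 + w^2) / (2::real)"
  using sum_squares_ge_zero[of "\<bar>v\<bar> - \<bar>w\<bar>" 0]
  by (simp add: abs_mult power2_eq_square algebra_simps abs_mult_self)

lemma abs_sum_sq_le: "(\<bar>v\<bar> + \<bar>w\<bar>)^2 \<le> 2 * (v^2 + w^2 :: real)"
  using abs_mult_le_half_sumsq[of v w]
  by (simp add: power2_eq_square algebra_simps abs_mult abs_mult_self)

lemma sq_bounds: "1/2 \<le> a \<Longrightarrow> a \<le> 1 \<Longrightarrow> 1/4 \<le> a^2 \<and> a^2 \<le> (1::real)"
  using power_mono[of "1/2" a 2] power_mono[of a 1 2] by (auto simp: power2_eq_square)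

lemma sq_diff_bound:
  fixes a b :: real assumes "0 \<le> a" "a \<le> 1" "0 \<le> b" "b \<le> 1"
  shows "\<bar>b^2 - a^2\<bar> \<le> 2 * \<bar>b - a\<bar>"
proof -
  have "b^2 - a^2 = (b + a) * (b - a)" by (simp add: power2_eq_square algebra_simps)
  then have "\<bar>b^2 - a^2\<bar> = (b + a) * \<bar>b - a\<bar>" using assms by (simp add: abs_mult)
  also have "\<dots> \<le> 2 * \<bar>b - a\<bar>" using assms by (intro mult_right_mono) auto
  finally show ?thesis .
qed

lemma next_value_bound:
  fixes x a0 a1 w0 w1 w2 :: real
  assumes x: "\<bar>x\<bar> \<le> 1" and a0: "0 \<le> a0" "a0 \<le> 1" and a1: "1/2 \<le> a1"
    and rec: "a1*w2 = x*w1 - a0*w0"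
  shows "\<bar>w2\<bar> \<le> 2*(\<bar>w1\<bar> + \<bar>w0\<bar>)" and "w2^2 \<le> 8*(w1^2 + w0^2)"
    and "w2^2 + w1^2 \<le> 9*(w1^2 + w0^2)"
proof -
  have "a1*\<bar>w2\<bar> = \<bar>x*w1 - a0*w0\<bar>" using a1 rec by (simp add: abs_mult flip: rec)
  also have "\<dots> \<le> \<bar>x\<bar>*\<bar>w1\<bar> + a0*\<bar>w0\<bar>"
    using a0 abs_triangle_ineq4[of "x*w1" "a0*w0"] by (simp add: abs_mult)
  also have "\<dots> \<le> 1*\<bar>w1\<bar> + 1*\<bar>w0\<bar>" using x a0 by (intro add_mono mult_right_mono) auto
  finally have "a1*\<bar>w2\<bar> \<le> \<bar>w1\<bar> + \<bar>w0\<bar>" by simp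
  moreover have "(1/2)*\<bar>w2\<bar> \<le> a1*\<bar>w2\<bar>" using a1 by (intro mult_right_mono) auto
  ultimately have "(1/2)*\<bar>w2\<bar> \<le> \<bar>w1\<bar> + \<bar>w0\<bar>" by linarith
  then show b: "\<bar>w2\<bar> \<le> 2*(\<bar>w1\<bar> + \<bar>w0\<bar>)" by simp
  have "w2^2 = \<bar>w2\<bar>^2" by simp
  also have "\<dots> \<le> (2*(\<bar>w1\<bar> + \<bar>w0\<bar>))^2" using b by (intro power_mono) auto
  also have "\<dots> = 4*(\<bar>w1\<bar> + \<bar>w0\<bar>)^2" by (simp only: power_mult_distrib) simp
  also have "\<dots> \<le> 8*(w1^2 + w0^2)" using abs_sum_sq_le[of w1 w0] by simp
  finally show "w2^2 \<le> 8*(w1^2 + w0^2)" .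
  moreover have "0 \<le> w0^2" by simp
  ultimately show "w2^2 + w1^2 \<le> 9*(w1^2 + w0^2)" by (smt (verit))
qed

lemma cross_term_bound:
  fixes x a0 a1 w0 w1 w2 :: real
  assumes x: "\<bar>x\<bar> \<le> 1" and a0: "0 \<le> a0" "a0 \<le> 1" and a1: "1/2 \<le> a1"
    and small: "\<bar>a1 - a0\<bar> \<le> 1/2" and rec: "a1*w2 = x*w1 - a0*w0"
  shows "\<bar>((a0-a1)*w2) * (2*x*w1 - 2*a0*w0 + (a0-a1)*w2)\<bar> \<le> 12*\<bar>a1-a0\<bar>*(w1^2 + w0^2)"
proof -
  define m where "m = \<bar>w1\<bar> + \<bar>w0\<bar>"
  have w2: "\<bar>w2\<bar> \<le> 2*m" using next_value_bound(1)[OF x a0 a1 rec] by (simp add: m_def)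
  have first: "\<bar>(a0-a1)*w2\<bar> \<le> \<bar>a1-a0\<bar>*(2*m)"
    unfolding abs_mult abs_minus_commute[of a0] by (intro mult_left_mono w2) auto
  also have "\<dots> \<le> (1/2)*(2*m)" using small by (intro mult_right_mono) (auto simp: m_def)
  finally have "\<bar>(a0-a1)*w2\<bar> \<le> m" by simp
  moreover have "\<bar>2*x*w1 - 2*a0*w0\<bar> \<le> 2*m"
  proof -
    have "\<bar>2*x*w1 - 2*a0*w0\<bar> \<le> 2*\<bar>x\<bar>*\<bar>w1\<bar> + 2*a0*\<bar>w0\<bar>"
      using a0 abs_triangle_ineq4[of "2*x*w1" "2*a0*w0"] by (simp add: abs_mult)
    also have "\<dots> \<le> 2*1*\<bar>w1\<bar> + 2*1*\<bar>w0\<bar>"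
      using x a0 by (intro add_mono mult_right_mono mult_left_mono) auto
    finally show ?thesis by (simp add: m_def)
  qed
  ultimately have second: "\<bar>2*x*w1 - 2*a0*w0 + (a0-a1)*w2\<bar> \<le> 3*m" by linarith
  have "\<bar>((a0-a1)*w2) * (2*x*w1 - 2*a0*w0 + (a0-a1)*w2)\<bar> \<le> (\<bar>a1-a0\<bar>*(2*m)) * (3*m)"
    unfolding abs_mult[of "(a0-a1)*w2"] using first second by (intro mult_mono) auto
  also have "\<dots> = 6*\<bar>a1-a0\<bar>*m^2" by (simp add: power2_eq_square)
  also have "\<dots> \<le> 6*\<bar>a1-a0\<bar>*(2*(w1^2 + w0^2))"
    using abs_sum_sq_le[of w1 w0] by (intro mult_left_mono) (auto simp: m_def)
  finally show ?thesis by (simp add: algebra_simps)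
qed

context
  fixes r x a0 a1 :: real
  assumes r_lt1: "r < 1" and x_le: "\<bar>x\<bar> \<le> r"
    and a0_ge: "1/2 \<le> a0" and a0_le: "a0 \<le> 1" and a1_ge: "1/2 \<le> a1" and a1_le: "a1 \<le> 1"
begin

lemma gap_bounds: "0 < 1 - r^2" "1 - r^2 \<le> 1"
proof -
  have "0 \<le> r" using x_le by linarith
  then show "0 < 1 - r^2" "1 - r^2 \<le> 1"
    using r_lt1 mult_left_mono[of r 1 r] by (auto simp: power2_eq_square)
qed

lemma x_le_1: "\<bar>x\<bar> \<le> 1"
  using x_le r_lt1 by linarith

lemma a0_nonneg: "0 \<le> a0"
  using a0_ge by linarith

lemma denom_bounds:
  "1 - r^2 \<le> 4*a0^2 - x^2" "4*a0^2 - x^2 \<le> 4" "1 - r^2 \<le> 4*a1^2 - x^2" "4*a1^2 - x^2 \<le> 4"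
proof -
  have "x^2 \<le> r^2" using x_le by (metis abs_ge_zero power2_abs power_mono)
  moreover have "0 \<le> x^2" by simp
  ultimately show "1 - r^2 \<le> 4*a0^2 - x^2" "4*a0^2 - x^2 \<le> 4" "1 - r^2 \<le> 4*a1^2 - x^2" "4*a1^2 - x^2 \<le> 4"
    using sq_bounds[OF a0_ge a0_le] sq_bounds[OF a1_ge a1_le] by linarith+
qed

lemma denom_pos: "0 < 4*a0^2 - x^2" "0 < 4*a1^2 - x^2"
  using denom_bounds gap_bounds by linarith+

lemma corr_bound: "\<bar>energy_corr x a0 a1\<bar> \<le> 2*\<bar>a1 - a0\<bar> / (1 - r^2)"
proof -
  have "\<bar>energy_corr x a0 a1\<bar> = \<bar>a1^2 - a0^2\<bar> * a0^2 / (4*a0^2 - x^2)"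
    using denom_pos by (simp add: energy_corr_def abs_mult)
  also have "\<dots> \<le> (2*\<bar>a1 - a0\<bar>) * 1 / (1 - r^2)"
    using sq_diff_bound[of a0 a1] sq_bounds[OF a0_ge a0_le] a0_ge a0_le a1_ge a1_le
      denom_bounds gap_bounds by (intro frac_le mult_mono) auto
  finally show ?thesis by simp
qed

lemma jac_energy_lower: "(1-r)/4 * (w1^2 + w0^2) \<le> jac_energy x a0 w0 w1"
proof -
  define Z where "Z = w1^2 + w0^2"
  have "\<bar>x*a0\<bar> * \<bar>w1*w0\<bar> \<le> (r*a0) * (Z/2)"
    using x_le a0_ge abs_mult_le_half_sumsq[of w1 w0] by (intro mult_mono) (auto simp: abs_mult Z_def)
  then have "\<bar>x*a0*w1*w0\<bar> \<le> r*a0*(Z/2)" by (simp add: abs_mult mult.assoc)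
  then have "a0^2*Z - r*a0*(Z/2) \<le> jac_energy x a0 w0 w1"
    unfolding jac_energy_def Z_def by (simp add: abs_le_iff algebra_simps)
  moreover have "(1/2)*((1-r)/2) * Z \<le> a0*(a0 - r/2) * Z"
    using a0_ge a0_le r_lt1 by (intro mult_right_mono mult_mono) (auto simp: Z_def)
  moreover have "a0^2*Z - r*a0*(Z/2) = a0*(a0 - r/2)*Z" by (simp add: power2_eq_square algebra_simps)
  ultimately show ?thesis by (simp add: Z_def)
qed

lemma lyap_lower:
  assumes slow: "\<bar>a1 - a0\<bar> \<le> (1-r^2)*(1-r)/16"
  shows "(1-r)/16 * (w1^2 + w0^2) \<le> lyap x a0 a1 w0 w1"
proof -
  define Z where "Z = w1^2 + w0^2"
  define P0 where "P0 = 4*a0^2 - x^2"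
  have "2*\<bar>a1 - a0\<bar> / (1 - r^2) \<le> (1-r)/8"
    using slow gap_bounds by (simp add: field_simps)
  then have "\<bar>energy_corr x a0 a1 * (w0^2 - w1^2)\<bar> \<le> (1-r)/8 * Z"
    unfolding abs_mult using corr_bound by (intro mult_mono) (auto simp: Z_def abs_le_iff)
  then have L0: "(1-r)/8 * Z \<le> mod_energy x a0 a1 w0 w1"
    using jac_energy_lower[of w1 w0] unfolding mod_energy_def Z_def by (simp add: abs_le_iff)
  moreover have "0 \<le> (1-r)/8 * Z" using r_lt1 by (simp add: Z_def)
  moreover have "0 < sqrt P0" "sqrt P0 \<le> 2"
    using denom_bounds denom_pos real_sqrt_le_mono[of P0 4] by (auto simp: P0_def)
  ultimately have "((1-r)/8 * Z) / 2 \<le> mod_energy x a0 a1 w0 w1 / sqrt P0"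
    using frac_le[of "mod_energy x a0 a1 w0 w1" "(1-r)/8 * Z" "sqrt P0" 2] by linarith
  then show ?thesis by (simp add: lyap_def P0_def Z_def)
qed

lemma sqrt_denom_ge: "1 - r^2 \<le> sqrt (4*a0^2 - x^2)" "1 - r^2 \<le> sqrt (4*a1^2 - x^2)"
proof -
  have "(1 - r^2)^2 \<le> 1 - r^2"
    using gap_bounds by (simp add: power2_eq_square mult_le_cancel_right1)
  then have "sqrt ((1 - r^2)^2) \<le> sqrt (4*a0^2 - x^2)" "sqrt ((1 - r^2)^2) \<le> sqrt (4*a1^2 - x^2)"
    using denom_bounds by (intro real_sqrt_le_mono; linarith)+
  then show "1 - r^2 \<le> sqrt (4*a0^2 - x^2)" "1 - r^2 \<le> sqrt (4*a1^2 - x^2)"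
    using gap_bounds by simp_all
qed

lemma lyap_upper: "lyap x a0 a1 w0 w1 \<le> 3*(w1^2 + w0^2)/(1-r^2)^2"
proof -
  define p where "p = 1 - r^2"
  define Z where "Z = w1^2 + w0^2"
  have p: "0 < p" "p \<le> 1" using gap_bounds by (auto simp: p_def)
  have "\<bar>x*a0\<bar> \<le> 1" using x_le_1 a0_ge a0_le by (simp add: abs_mult mult_le_one)
  then have "\<bar>x*a0\<bar> * \<bar>w1*w0\<bar> \<le> 1 * Z"
    using abs_mult_le_half_sumsq[of w1 w0] by (intro mult_mono) (auto simp: Z_def)
  then have "\<bar>x*a0*w1*w0\<bar> \<le> Z" by (simp add: abs_mult mult.assoc)
  moreover have "a0^2 * Z \<le> 1 * Z"
    using sq_bounds[OF a0_ge a0_le] by (intro mult_right_mono) (auto simp: Z_def)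
  moreover have "0 \<le> a0^2 * Z" by (simp add: Z_def)
  ultimately have K: "\<bar>jac_energy x a0 w0 w1\<bar> \<le> 2*Z"
    unfolding jac_energy_def Z_def[symmetric] abs_le_iff by linarith
  have "\<bar>energy_corr x a0 a1\<bar> \<le> 1/p"
  proof -
    have "\<bar>energy_corr x a0 a1\<bar> = \<bar>a1^2 - a0^2\<bar> * a0^2 / (4*a0^2 - x^2)"
      using denom_pos by (simp add: energy_corr_def abs_mult)
    also have "\<dots> \<le> 1 * 1 / p"
      using sq_bounds[OF a0_ge a0_le] sq_bounds[OF a1_ge a1_le] denom_bounds p
      by (intro frac_le mult_mono) (auto simp: abs_le_iff p_def)
    finally show ?thesis by simp
  qed
  then have "\<bar>energy_corr x a0 a1 * (w0^2 - w1^2)\<bar> \<le> (1/p) * Z"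
    unfolding abs_mult using p by (intro mult_mono) (auto simp: Z_def abs_le_iff)
  with K have "\<bar>mod_energy x a0 a1 w0 w1\<bar> \<le> 2*Z + Z/p"
    unfolding mod_energy_def by (simp add: abs_le_iff)
  also have "\<dots> \<le> 3*Z/p"
  proof -
    have "2*Z*p \<le> 2*Z*1" using p by (intro mult_left_mono) (auto simp: Z_def)
    then have "2*Z \<le> 2*Z/p" using p by (simp add: le_divide_eq)
    then show ?thesis by (simp add: add_divide_distrib)
  qed
  finally have "\<bar>mod_energy x a0 a1 w0 w1\<bar> / sqrt (4*a0^2 - x^2) \<le> (3*Z/p) / p"
    using sqrt_denom_ge p by (intro frac_le) (auto simp: p_def)
  moreover have "lyap x a0 a1 w0 w1 \<le> \<bar>mod_energy x a0 a1 w0 w1\<bar> / sqrt (4*a0^2 - x^2)"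
    unfolding lyap_def using denom_pos by (simp add: divide_right_mono)
  ultimately show ?thesis by (simp add: p_def Z_def power2_eq_square)
qed

lemma corr_diff_bound:
  assumes a2: "1/2 \<le> a2" "a2 \<le> 1"
  shows "\<bar>energy_corr x a0 a1 - energy_corr x a1 a2\<bar>
     \<le> \<bar>(a1^2 - a0^2) - (a2^2 - a1^2)\<bar> / (1-r^2) + 4*\<bar>a1 - a0\<bar>*\<bar>a2 - a1\<bar> / (1-r^2)^2"
proof -
  define p where "p = 1 - r^2"
  define P0 where "P0 = 4*a0^2 - x^2"
  define P1 where "P1 = 4*a1^2 - x^2"
  define d1 where "d1 = a1^2 - a0^2"
  define d2 where "d2 = a2^2 - a1^2"
  have p: "0 < p" using gap_bounds by (simp add: p_def)
  have P: "p \<le> P0" "0 < P0" "p \<le> P1" "0 < P1"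
    using denom_bounds denom_pos by (auto simp: p_def P0_def P1_def)
  have d1: "\<bar>d1\<bar> \<le> 2*\<bar>a1 - a0\<bar>" and d2: "\<bar>d2\<bar> \<le> 2*\<bar>a2 - a1\<bar>"
    using sq_diff_bound a0_ge a0_le a1_ge a1_le a2 by (auto simp: d1_def d2_def)
  have "energy_corr x a0 a1 - energy_corr x a1 a2 = (d1 - d2)*(a0^2/P0) + d2*(x^2*d1/(P0*P1))"
    unfolding energy_corr_def d1_def d2_def P0_def[symmetric] P1_def[symmetric]
    using P by (intro corr_difference) (auto simp: P0_def P1_def)
  then have "\<bar>energy_corr x a0 a1 - energy_corr x a1 a2\<bar>
      \<le> \<bar>(d1 - d2)*(a0^2/P0)\<bar> + \<bar>d2*(x^2*d1/(P0*P1))\<bar>"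
    by (simp only: abs_triangle_ineq)
  moreover have "\<bar>(d1 - d2)*(a0^2/P0)\<bar> \<le> \<bar>d1 - d2\<bar> * (1/p)"
    unfolding abs_mult using sq_bounds[OF a0_ge a0_le] P p
    by (intro mult_left_mono) (auto intro!: frac_le)
  moreover have "\<bar>d2*(x^2*d1/(P0*P1))\<bar> \<le> 4*\<bar>a1 - a0\<bar>*\<bar>a2 - a1\<bar> / p^2"
  proof -
    have "\<bar>d2*(x^2*d1/(P0*P1))\<bar> = \<bar>d2\<bar>*(x^2*\<bar>d1\<bar>)/(P0*P1)"
      using P by (simp add: abs_mult abs_divide)
    also have "\<dots> \<le> (2*\<bar>a2 - a1\<bar>)*(1*(2*\<bar>a1 - a0\<bar>))/(p*p)"
      using d1 d2 x_le_1 P p abs_le_square_iff[of x 1]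
      by (intro frac_le mult_mono) (auto simp: abs_le_iff)
    finally show ?thesis by (simp add: power2_eq_square mult.commute mult.left_commute)
  qed
  ultimately have "\<bar>energy_corr x a0 a1 - energy_corr x a1 a2\<bar>
      \<le> \<bar>d1 - d2\<bar> / p + 4*\<bar>a1 - a0\<bar>*\<bar>a2 - a1\<bar> / p^2"
    by simp
  then show ?thesis unfolding p_def d1_def d2_def .
qed

lemma mod_energy_error:
  assumes a2: "1/2 \<le> a2" "a2 \<le> 1" and rec: "a1*w2 = x*w1 - a0*w0"
    and slow: "\<bar>a1 - a0\<bar> \<le> (1-r^2)*(1-r)/16"
  shows "\<bar>mod_energy x a1 a2 w1 w2 - (1 + 2*(a1^2-a0^2)/(4*a0^2 - x^2)) * mod_energy x a0 a1 w0 w1\<bar>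
     \<le> 36 * coef_variation a0 a1 a2 * (w1^2 + w0^2) / (1-r^2)^2"
proof -
  define p where "p = 1 - r^2"
  define Z where "Z = w1^2 + w0^2"
  define H where "H = \<bar>a1 - a0\<bar>"
  define G where "G = \<bar>a2 - a1\<bar>"
  define D where "D = \<bar>(a1^2 - a0^2) - (a2^2 - a1^2)\<bar>"
  define c where "c = 2*(a1^2-a0^2)/(4*a0^2 - x^2)"
  have p: "0 < p" "p \<le> 1" using gap_bounds by (auto simp: p_def)
  have nonneg: "0 \<le> H" "0 \<le> G" "0 \<le> D" "0 \<le> Z" by (auto simp: H_def G_def D_def Z_def)
  have "H \<le> p * ((1-r)/16)" using slow by (simp add: H_def p_def)
  also have "\<dots> \<le> 1 * (1/8)" using p r_lt1 x_le by (intro mult_mono) auto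
  finally have H_small: "H \<le> 1/2" by simp
  have c: "\<bar>c\<bar> \<le> 4*H/p"
  proof -
    have "\<bar>c\<bar> = 2*\<bar>a1^2 - a0^2\<bar>/(4*a0^2 - x^2)" unfolding c_def abs_divide abs_mult using denom_pos by simp
    also have "\<dots> \<le> 2*(2*H)/p"
      using sq_diff_bound[of a0 a1] a0_ge a0_le a1_ge a1_le denom_bounds p
      by (intro frac_le) (auto simp: H_def p_def)
    finally show ?thesis by simp
  qed
  have E: "\<bar>energy_corr x a0 a1\<bar> \<le> 2*H/p" using corr_bound by (simp add: H_def p_def)
  have w2: "\<bar>w1^2 - w2^2\<bar> \<le> 9*Z"
    using next_value_bound(2)[OF x_le_1 a0_nonneg a0_le a1_ge rec] unfolding Z_def
    by (smt (verit) zero_le_power2)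
  have "\<bar>c * energy_corr x a0 a1 * (w0^2 - w1^2)\<bar> \<le> (4*H/p) * (2*H/p) * Z"
    unfolding abs_mult using c E nonneg p by (intro mult_mono) (auto simp: Z_def abs_le_iff)
  moreover have "\<bar>(energy_corr x a0 a1 - energy_corr x a1 a2) * (w1^2 - w2^2)\<bar> \<le> (D/p + 4*H*G/p^2) * (9*Z)"
    unfolding abs_mult using corr_diff_bound[OF a2] w2 nonneg p
    by (intro mult_mono) (auto simp: H_def G_def D_def p_def)
  moreover have "\<bar>(c/2) * (((a0-a1)*w2) * (2*x*w1 - 2*a0*w0 + (a0-a1)*w2))\<bar> \<le> (2*H/p) * (12*H*Z)"
    unfolding abs_mult[of "c/2"]
    using c cross_term_bound[OF x_le_1 a0_nonneg a0_le a1_ge _ rec] H_small nonneg p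
    by (intro mult_mono) (auto simp: H_def Z_def)
  moreover have "mod_energy x a1 a2 w1 w2 - (1 + c) * mod_energy x a0 a1 w0 w1
      = c * energy_corr x a0 a1 * (w0^2 - w1^2) + (energy_corr x a0 a1 - energy_corr x a1 a2) * (w1^2 - w2^2)
        + (c/2) * (((a0-a1)*w2) * (2*x*w1 - 2*a0*w0 + (a0-a1)*w2))"
  proof -
    define d where "d = a1^2 - a0^2"
    define P0 where "P0 = 4*a0^2 - x^2"
    have half: "2*d/P0/2 = d/P0" by simp
    have "P0 \<noteq> 0" using denom_pos by (simp add: P0_def)
    then show ?thesis
      using mod_energy_step[OF rec, of a2]
      unfolding c_def d_def[symmetric] P0_def[symmetric] half by linarith
  qed
  ultimately have "\<bar>mod_energy x a1 a2 w1 w2 - (1 + c) * mod_energy x a0 a1 w0 w1\<bar>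
      \<le> (4*H/p) * (2*H/p) * Z + (D/p + 4*H*G/p^2) * (9*Z) + (2*H/p) * (12*H*Z)"
    by (smt (verit) abs_triangle_ineq)
  also have "\<dots> = (8*H^2 + 36*(H*G) + 9*(p*D) + 24*(p*H^2)) * Z / p^2"
    using p by (simp add: field_simps power2_eq_square)
  also have "\<dots> \<le> (36 * coef_variation a0 a1 a2) * Z / p^2"
  proof -
    have "p*D \<le> D" "p*H^2 \<le> H^2" using p nonneg by (auto intro: mult_left_le_one_le)
    moreover have "coef_variation a0 a1 a2 = H^2 + H*G + D"
      by (simp add: coef_variation_def H_def G_def D_def)
    moreover have "0 \<le> H*G" "0 \<le> H^2" using nonneg by simp_all
    ultimately have "8*H^2 + 36*(H*G) + 9*(p*D) + 24*(p*H^2) \<le> 36 * coef_variation a0 a1 a2"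
      using nonneg by linarith
    then show ?thesis using nonneg p by (intro divide_right_mono mult_right_mono) auto
  qed
  finally show ?thesis by (simp add: c_def p_def Z_def)
qed

lemma factor_change_bound: "\<bar>4*(a1^2 - a0^2)/(4*a0^2 - x^2)\<bar> \<le> 8*\<bar>a1 - a0\<bar>/(1 - r^2)"
proof -
  have "\<bar>4*(a1^2 - a0^2)/(4*a0^2 - x^2)\<bar> = 4*\<bar>a1^2 - a0^2\<bar>/(4*a0^2 - x^2)"
    unfolding abs_divide abs_mult using denom_pos by simp
  also have "\<dots> \<le> 4*(2*\<bar>a1 - a0\<bar>)/(1 - r^2)"
    using sq_diff_bound[of a0 a1] a0_ge a0_le a1_ge a1_le denom_bounds gap_bounds
    by (intro frac_le) auto
  finally show ?thesis by simp
qed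

(* The first-order growth factor of the corrected energy is compensated by the change of
   normalisation, up to a factor 1 + y^2. *)
lemma first_order_factor:
  assumes slow: "\<bar>a1 - a0\<bar> \<le> (1-r^2)*(1-r)/16"
  defines "y \<equiv> 4*(a1^2 - a0^2)/(4*a0^2 - x^2)"
  shows "1 + 2*(a1^2 - a0^2)/(4*a0^2 - x^2)
     \<le> sqrt (4*a1^2 - x^2) / sqrt (4*a0^2 - x^2) * (1 + y^2)"
proof -
  define p where "p = 1 - r^2"
  define P0 where "P0 = 4*a0^2 - x^2"
  define \<sigma> where "\<sigma> = sqrt (4*a1^2 - x^2) / sqrt P0"
  have p: "0 < p" using gap_bounds by (simp add: p_def)
  have P: "0 < P0" "0 < 4*a1^2 - x^2" using denom_pos by (auto simp: P0_def)
  have "4*a1^2 - x^2 = P0 * (1 + y)" using P by (simp add: P0_def y_def field_simps)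
  then have \<sigma>_sq: "\<sigma>^2 = 1 + y" using P by (simp add: \<sigma>_def power_divide)
  have "\<bar>y\<bar> \<le> 8*\<bar>a1 - a0\<bar>/p" using factor_change_bound by (simp add: y_def p_def)
  also have "\<dots> \<le> 8*(p/16)/p"
  proof -
    have "p*(1-r) \<le> p*1" using p x_le by (intro mult_left_mono) auto
    then have "\<bar>a1 - a0\<bar> \<le> p/16" using slow by (simp add: p_def)
    then show ?thesis using p by (intro divide_right_mono) auto
  qed
  finally have y_small: "\<bar>y\<bar> \<le> 1/2" using p by simp
  have \<sigma>_ge: "1/2 \<le> \<sigma>"
  proof (rule ccontr)
    assume "\<not> 1/2 \<le> \<sigma>"
    moreover have "0 \<le> \<sigma>" using P by (simp add: \<sigma>_def)
    ultimately have "\<sigma>^2 < (1/2)^2" by (intro power_strict_mono) auto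
    with \<sigma>_sq y_small show False by (simp add: power2_eq_square abs_le_iff)
  qed
  have "1 + 2*(a1^2 - a0^2)/P0 = (1 + \<sigma>^2)/2"
    unfolding \<sigma>_sq y_def P0_def[symmetric] using P by (simp add: field_simps)
  also have "\<dots> \<le> \<sigma>*(1 + (\<sigma>^2 - 1)^2)" by (rule half_sum_le[OF \<sigma>_ge])
  also have "\<dots> = \<sigma>*(1+y^2)" by (simp add: \<sigma>_sq)
  finally show ?thesis by (simp add: \<sigma>_def P0_def)
qed

lemma lyap_step:
  assumes a2: "1/2 \<le> a2" "a2 \<le> 1" and rec: "a1*w2 = x*w1 - a0*w0"
    and slow: "\<bar>a1 - a0\<bar> \<le> (1-r^2)*(1-r)/16"
  shows "lyap x a1 a2 w1 w2
     \<le> (1 + 832 / ((1-r^2)^3 * (1-r)) * coef_variation a0 a1 a2) * lyap x a0 a1 w0 w1"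
proof -
  define p where "p = 1 - r^2"
  define K where "K = p^3 * (1-r)"
  define P0 where "P0 = 4*a0^2 - x^2"
  define P1 where "P1 = 4*a1^2 - x^2"
  define y where "y = 4*(a1^2 - a0^2)/P0"
  define q where "q = coef_variation a0 a1 a2"
  define Z where "Z = w1^2 + w0^2"
  define L0 where "L0 = mod_energy x a0 a1 w0 w1"
  define \<Lambda> where "\<Lambda> = lyap x a0 a1 w0 w1"
  define err where "err = mod_energy x a1 a2 w1 w2 - (1 + 2*(a1^2-a0^2)/P0) * L0"
  have p: "0 < p" "p \<le> 1" using gap_bounds by (auto simp: p_def)
  have K: "0 < K" "K \<le> 4*p^2"
  proof -
    show "0 < K" using p r_lt1 by (simp add: K_def)
    have "p * (1-r) \<le> 1 * 4" using p r_lt1 x_le by (intro mult_mono) auto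
    then have "p^2 * (p * (1-r)) \<le> p^2 * 4" by (intro mult_left_mono) auto
    then show "K \<le> 4*p^2" by (simp add: K_def power3_eq_cube power2_eq_square algebra_simps)
  qed
  have P: "0 < P0" "0 < P1" using denom_pos by (auto simp: P0_def P1_def)
  have sqrtP: "0 < sqrt P0" "p \<le> sqrt P1" using P sqrt_denom_ge by (auto simp: p_def P1_def)
  have q: "0 \<le> q" by (simp add: q_def coef_variation_def)
  have lower: "(1-r)/16 * Z \<le> \<Lambda>" using lyap_lower[OF slow] by (simp add: Z_def \<Lambda>_def)
  moreover have "0 \<le> (1-r)/16 * Z" using r_lt1 by (simp add: Z_def)
  ultimately have \<Lambda>_nonneg: "0 \<le> \<Lambda>" by linarith
  have \<Lambda>_eq: "\<Lambda> = L0 / sqrt P0" by (simp add: \<Lambda>_def L0_def lyap_def P0_def)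
  then have L0_nonneg: "0 \<le> L0" using \<Lambda>_nonneg P by (simp add: zero_le_divide_iff)
  have "1 + 2*(a1^2-a0^2)/P0 \<le> sqrt P1 / sqrt P0 * (1+y^2)"
    using first_order_factor[OF slow] by (simp add: P0_def P1_def y_def)
  then have main: "mod_energy x a1 a2 w1 w2 \<le> sqrt P1 / sqrt P0 * (1+y^2) * L0 + \<bar>err\<bar>"
    using mult_right_mono[OF _ L0_nonneg] unfolding err_def by fastforce
  have y_sq: "y^2 \<le> 256*q/K"
  proof -
    have "\<bar>y\<bar> \<le> 8*\<bar>a1 - a0\<bar>/p" using factor_change_bound by (simp add: y_def p_def P0_def)
    then have "y^2 \<le> (8*\<bar>a1 - a0\<bar>/p)^2" by (metis abs_ge_zero power2_abs power_mono)
    also have "\<dots> = 64*(a1 - a0)^2/p^2" by (simp add: power_divide power_mult_distrib)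
    also have "\<dots> \<le> 64*q/p^2"
      using p by (intro divide_right_mono mult_left_mono) (auto simp: q_def coef_variation_def)
    also have "\<dots> = 256*q/(4*p^2)" by simp
    also have "\<dots> \<le> 256*q/K" using K q p by (intro divide_left_mono) auto
    finally show ?thesis .
  qed
  have err_rel: "\<bar>err\<bar>/p \<le> 576*q/K * \<Lambda>"
  proof -
    have "\<bar>err\<bar> \<le> 36*q*Z/p^2"
      using mod_energy_error[OF a2 rec slow] by (simp add: err_def q_def Z_def p_def P0_def L0_def)
    then have "\<bar>err\<bar>/p \<le> (36*q*Z/p^2)/p" using p by (intro divide_right_mono) auto
    also have "\<dots> \<le> (36*q*(16/(1-r) * \<Lambda>)/p^2)/p"
      using lower r_lt1 q p by (intro divide_right_mono mult_left_mono) (auto simp: field_simps)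
    also have "\<dots> = 576*q/K * \<Lambda>"
      using p r_lt1 by (simp add: K_def field_simps power3_eq_cube power2_eq_square)
    finally show ?thesis .
  qed
  have "lyap x a1 a2 w1 w2 = mod_energy x a1 a2 w1 w2 / sqrt P1" by (simp add: lyap_def P1_def)
  also have "\<dots> \<le> (sqrt P1 / sqrt P0 * (1+y^2) * L0 + \<bar>err\<bar>) / sqrt P1"
    using main P by (intro divide_right_mono) auto
  also have "\<dots> = (1+y^2)*\<Lambda> + \<bar>err\<bar>/sqrt P1"
    using sqrtP P \<Lambda>_eq by (simp add: add_divide_distrib)
  also have "\<dots> \<le> (1+y^2)*\<Lambda> + \<bar>err\<bar>/p"
    using sqrtP p P by (intro add_left_mono divide_left_mono) auto
  also have "\<dots> \<le> (1 + 256*q/K)*\<Lambda> + 576*q/K * \<Lambda>"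
    using y_sq \<Lambda>_nonneg err_rel by (intro add_mono mult_right_mono) auto
  also have "\<dots> = (1 + 832/K * q) * \<Lambda>" by (simp add: algebra_simps add_divide_distrib)
  finally show ?thesis by (simp add: K_def p_def q_def \<Lambda>_def)
qed

end

lemma product_growth_bound:
  fixes L q :: "nat \<Rightarrow> real"
  assumes L_nonneg: "\<And>m. N \<le> m \<Longrightarrow> 0 \<le> L m"
    and L_step: "\<And>m. N \<le> m \<Longrightarrow> L (Suc m) \<le> (1 + C * q m) * L m"
    and C: "0 \<le> C" and q: "\<And>m. 0 \<le> q m" "summable q"
  shows "L (N + k) \<le> L N * exp (C * suminf q)"
proof -
  have partial: "L (N + k) \<le> L N * exp (C * sum q {N..<N + k})"
  proof (induction k)
    case 0
    then show ?case by simp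
  next
    case (Suc k)
    have "L (N + Suc k) \<le> (1 + C * q (N + k)) * L (N + k)" using L_step[of "N + k"] by simp
    also have "\<dots> \<le> exp (C * q (N + k)) * L (N + k)"
      using L_nonneg[of "N + k"] by (intro mult_right_mono) auto
    also have "\<dots> \<le> exp (C * q (N + k)) * (L N * exp (C * sum q {N..<N + k}))"
      using Suc by (intro mult_left_mono) auto
    also have "\<dots> = L N * exp (C * sum q {N..<N + Suc k})"
      by (simp add: exp_add[symmetric] algebra_simps)
    finally show ?case .
  qed
  also have "\<dots> \<le> L N * exp (C * suminf q)"
  proof -
    have "sum q {N..<N + k} \<le> suminf q" using q by (intro sum_le_suminf) auto
    then show ?thesis using L_nonneg[of N] C by (intro mult_left_mono) (auto intro: mult_left_mono)
  qed
  finally show ?thesis .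
qed

(* Crude a-priori bound, used for the finitely many steps before the coefficients vary slowly. *)
lemma solution_growth:
  fixes a u :: "nat \<Rightarrow> real"
  assumes a: "\<And>n. 1/2 \<le> a n \<and> a n \<le> 1" and x: "\<bar>x\<bar> \<le> 1"
    and rec: "\<And>n. a (n+1) * u (n+2) = x * u (n+1) - a n * u n"
    and init: "(u 0)^2 + (u 1)^2 = 1"
  shows "u (m+1)^2 + u m^2 \<le> 9^m"
proof (induction m)
  case 0
  then show ?case using init by (simp add: add.commute)
next
  case (Suc m)
  have "u (m+2)^2 + u (m+1)^2 \<le> 9*(u (m+1)^2 + u m^2)"
    using next_value_bound(3)[OF x _ _ _ rec] a[of m] a[of "m+1"] by auto
  then have "u (Suc m + 1)^2 + u (Suc m)^2 \<le> 9 * (u (m+1)^2 + u m^2)"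
    by (simp add: numeral_2_eq_2)
  also have "\<dots> \<le> 9 * 9^m" using Suc by simp
  finally show ?case by simp
qed

(* Energy bound along a single solution, once the coefficients vary slowly from index N on:
   crude growth up to N, then the Lyapunov function. *)
lemma solution_energy_bound:
  fixes a u :: "nat \<Rightarrow> real"
  assumes r: "r < 1" and x: "\<bar>x\<bar> \<le> r"
    and a: "\<And>n. 1/2 \<le> a n \<and> a n \<le> 1"
    and var: "summable (\<lambda>n. coef_variation (a n) (a (n+1)) (a (n+2)))"
    and slow: "\<And>n. N \<le> n \<Longrightarrow> \<bar>a (n+1) - a n\<bar> \<le> (1-r^2)*(1-r)/16"
    and rec: "\<And>n. a (n+1) * u (n+2) = x * u (n+1) - a n * u n"
    and init: "(u 0)^2 + (u 1)^2 = 1"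
  defines "S \<equiv> \<Sum>n. coef_variation (a n) (a (n+1)) (a (n+2))"
  shows "u (n+1)^2 + u n^2
     \<le> 9^N + 3*9^N/(1-r^2)^2 * exp (832/((1-r^2)^3*(1-r)) * S) / ((1-r)/16)"
proof -
  define q where "q = (\<lambda>n. coef_variation (a n) (a (n+1)) (a (n+2)))"
  define p where "p = 1 - r^2"
  define C where "C = 832 / (p^3 * (1-r))"
  define Z where "Z n = u (n+1)^2 + u n^2" for n
  define \<Lambda> where "\<Lambda> n = lyap x (a n) (a (n+1)) (u n) (u (n+1))" for n
  have r0: "0 \<le> r" using x by linarith
  have p: "0 < p" using r r0 mult_left_mono[of r 1 r] by (auto simp: p_def power2_eq_square)
  have C: "0 \<le> C" using p r by (simp add: C_def)
  have q: "\<And>n. 0 \<le> q n" "summable q" using var by (simp_all add: q_def coef_variation_def)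
  have Z_growth: "Z m \<le> 9^m" for m
    using solution_growth[OF a _ rec init] x r by (simp add: Z_def)
  have lower: "(1-r)/16 * Z m \<le> \<Lambda> m" if "N \<le> m" for m
    using lyap_lower[OF r x _ _ _ _ slow[OF that]] a[of m] a[of "m+1"] by (simp add: \<Lambda>_def Z_def)
  have \<Lambda>_nonneg: "0 \<le> \<Lambda> m" if "N \<le> m" for m
  proof -
    have "0 \<le> (1-r)/16 * Z m" using r by (simp add: Z_def)
    then show ?thesis using lower[OF that] by linarith
  qed
  have \<Lambda>_step: "\<Lambda> (Suc m) \<le> (1 + C * q m) * \<Lambda> m" if "N \<le> m" for m
    using lyap_step[OF r x _ _ _ _ _ _ _ slow[OF that]] a[of m] a[of "m+1"] a[of "m+2"] rec[of m]
    by (simp add: \<Lambda>_def C_def q_def p_def numeral_2_eq_2)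
  have \<Lambda>_N: "\<Lambda> N \<le> 3*9^N/p^2"
  proof -
    have "\<Lambda> N \<le> 3 * Z N / p^2"
      using lyap_upper[OF r x] a[of N] a[of "N+1"] by (simp add: \<Lambda>_def Z_def p_def)
    also have "\<dots> \<le> 3*9^N/p^2" using Z_growth[of N] p by (intro divide_right_mono) auto
    finally show ?thesis .
  qed
  have tail: "0 \<le> 3*9^N/p^2 * exp (C * S) / ((1-r)/16)" using r by simp
  show ?thesis
  proof (cases "N \<le> n")
    case True
    then obtain k where k: "n = N + k" using le_Suc_ex by blast
    have "(1-r)/16 * Z n \<le> \<Lambda> N * exp (C * S)"
      using lower[OF True] k product_growth_bound[where L=\<Lambda> and N=N and k=k, OF \<Lambda>_nonneg \<Lambda>_step C q]
      by (simp add: S_def q_def)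
    also have "\<dots> \<le> 3*9^N/p^2 * exp (C * S)" using \<Lambda>_N by (intro mult_right_mono) auto
    finally have "Z n \<le> 3*9^N/p^2 * exp (C * S) / ((1-r)/16)"
      using r by (subst pos_le_divide_eq) (auto simp: mult.commute)
    then show ?thesis unfolding Z_def p_def C_def by (smt (verit) zero_le_power)
  next
    case False
    then have "Z n \<le> 9^N" using Z_growth[of n] power_increasing[of n N "9::real"] by linarith
    then show ?thesis using tail unfolding Z_def p_def C_def by linarith
  qed
qed

theorem jacobi_solutions_bounded:
  fixes a :: "nat \<Rightarrow> real" and r :: real
  assumes r: "0 \<le> r" "r < 1"
    and a: "\<And>n. 1/2 \<le> a n \<and> a n \<le> 1"
    and var: "summable (\<lambda>n. coef_variation (a n) (a (n+1)) (a (n+2)))"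
    and incr: "(\<lambda>n. a (n+1) - a n) \<longlonglongrightarrow> 0"
  shows "\<exists>C. \<forall>x u. \<bar>x\<bar> \<le> r \<longrightarrow> (\<forall>n. a (n+1) * u (n+2) = x * u (n+1) - a n * u n)
            \<longrightarrow> (u 0)^2 + (u 1)^2 = 1 \<longrightarrow> (\<forall>n. \<bar>u n\<bar> \<le> C)"
proof -
  have eps: "0 < (1-r^2)*(1-r)/16" using r mult_left_mono[of r 1 r] by (auto simp: power2_eq_square)
  obtain N where "\<And>n. N \<le> n \<Longrightarrow> \<bar>a (n+1) - a n\<bar> < (1-r^2)*(1-r)/16"
    using LIMSEQ_D[OF incr eps] by auto
  then have N: "\<And>n. N \<le> n \<Longrightarrow> \<bar>a (n+1) - a n\<bar> \<le> (1-r^2)*(1-r)/16" by (simp add: less_imp_le)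
  define B where "B = 9^N + 3*9^N/(1-r^2)^2
     * exp (832/((1-r^2)^3*(1-r)) * (\<Sum>n. coef_variation (a n) (a (n+1)) (a (n+2)))) / ((1-r)/16)"
  have "\<bar>u n\<bar> \<le> 1 + B"
    if x: "\<bar>x\<bar> \<le> r" and rec: "\<forall>n. a (n+1) * u (n+2) = x * u (n+1) - a n * u n"
      and init: "(u 0)^2 + (u 1)^2 = 1" for x u n
  proof -
    have "u (n+1)^2 + u n^2 \<le> B"
      using solution_energy_bound[OF r(2) x a var N rec[rule_format] init] by (simp add: B_def)
    moreover have "\<bar>u n\<bar> \<le> 1 + u n^2"
      using sum_squares_ge_zero[of "\<bar>u n\<bar> - 1" 0] by (simp add: power2_eq_square algebra_simps abs_mult_self)
    ultimately show ?thesis by (smt (verit) zero_le_power2)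
  qed
  then show ?thesis by blast
qed

lemma blen_ge_2: "blen j \<ge> 2"
proof -
  have "(3::nat)^(j^2) \<ge> 1" "(2::nat)^(j^2) \<ge> 1" by simp_all
  thus ?thesis unfolding blen_def by linarith
qed

lemma bstart_Suc: "j \<ge> 1 \<Longrightarrow> bstart (Suc j) = bstart j + blen j"
  unfolding bstart_def by simp

lemma bstart_mono: "1 \<le> i \<Longrightarrow> i \<le> k \<Longrightarrow> bstart i \<le> bstart k"
  unfolding bstart_def by (intro add_left_mono sum_mono2) auto

lemma bstart_ge: "bstart j \<ge> j"
proof (induction j)
  case 0 thus ?case by simp
next
  case (Suc j)
  show ?case
  proof (cases "j = 0")
    case True thus ?thesis by (simp add: bstart_def)
  next
    case False
    thus ?thesis using Suc bstart_Suc[of j] blen_ge_2[of j] by simp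
  qed
qed

lemma blk_props:
  assumes "n \<ge> 1"
  shows "blk n \<ge> 1" "bstart (blk n) \<le> n" "n < bstart (Suc (blk n))"
proof -
  have ex: "n < bstart (Suc n)" using bstart_ge[of "Suc n"] by simp
  show lt: "n < bstart (Suc (blk n))" unfolding blk_def by (rule LeastI[of _ n]) (rule ex)
  show b1: "blk n \<ge> 1"
  proof (rule ccontr)
    assume "\<not> blk n \<ge> 1" hence "blk n = 0" by simp
    with lt assms show False by (simp add: bstart_def)
  qed
  then obtain j where j: "blk n = Suc j" by (cases "blk n") auto
  have "\<not> n < bstart (Suc j)"
  proof
    assume "n < bstart (Suc j)"
    hence "blk n \<le> j" unfolding blk_def by (rule Least_le)
    with j show False by simp
  qed
  thus "bstart (blk n) \<le> n" using j by simp
qed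

lemma blk_eq:
  assumes j: "j \<ge> 1" and n: "bstart j \<le> n" "n < bstart (Suc j)"
  shows "blk n = j"
  unfolding blk_def
proof (rule Least_equality)
  show "n < bstart (Suc j)" by fact
next
  fix i assume i: "n < bstart (Suc i)"
  show "j \<le> i"
  proof (rule ccontr)
    assume "\<not> j \<le> i"
    hence "Suc i \<le> j" by simp
    hence "bstart (Suc i) \<le> bstart j" by (intro bstart_mono) auto
    with i n show False by simp
  qed
qed

(* The coefficients of Example 5.1 are 2^(-e_n); on a block with parameters nA = #A_j, N = j^6,
   nC = #C_j the exponent e follows this piecewise linear profile in the offset m (0 on A_j,
   rising with slope 1/N on B_j, 1 on C_j, falling back on D_j). *)
definition profile :: "nat \<Rightarrow> nat \<Rightarrow> nat \<Rightarrow> nat \<Rightarrow> real" where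
  "profile nA N nC m = (if m < nA then 0 else if m < nA + (N-1) then real (m - nA + 1) / real N
     else if m < nA + (N-1) + nC then 1
     else max 0 (1 - real (m - (nA + (N-1) + nC) + 1) / real N))"

definition ex_exponent :: "nat \<Rightarrow> real" where
  "ex_exponent n = (if n = 0 then 0 else
     profile (3^(blk n ^2)) (blk n ^6) (2^(blk n ^2)) (n - bstart (blk n)))"

lemma profile_range: "N \<ge> 1 \<Longrightarrow> 0 \<le> profile nA N nC m \<and> profile nA N nC m \<le> 1"
  unfolding profile_def by (auto simp: field_simps)

lemma ex_exponent_range: "0 \<le> ex_exponent n \<and> ex_exponent n \<le> 1"
proof (cases "n = 0")
  case True thus ?thesis by (simp add: ex_exponent_def)
next
  case False
  hence "blk n \<ge> 1" using blk_props(1)[of n] by simp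
  hence "blk n ^ 6 \<ge> 1" by simp
  thus ?thesis using False profile_range by (simp add: ex_exponent_def)
qed

lemma ex_a_powr: "ex_a n = 2 powr (- ex_exponent n)"
proof (cases "n = 0")
  case True
  then show ?thesis by (simp add: ex_a_def ex_exponent_def)
next
  case False
  define j where "j = blk n"
  define m where "m = n - bstart j"
  define nA where "nA = (3::nat)^(j^2)"
  define N where "N = j^6"
  define nC where "nC = (2::nat)^(j^2)"
  have j1: "j \<ge> 1" using blk_props(1)[of n] False by (simp add: j_def)
  have N1: "N \<ge> 1" using j1 by (simp add: N_def)
  have mb: "m < nA + (N-1) + nC + (N-1)"
    using blk_props(2,3)[of n] False bstart_Suc[OF j1] unfolding m_def j_def[symmetric]
    by (simp add: blen_def nA_def N_def nC_def)
  have ea: "ex_a n = (if m < nA then 1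
      else if m < nA + (N-1) then 2 powr (- real (m - nA + 1) / real N)
      else if m < nA + (N-1) + nC then 1/2
      else 2 powr (-1 + real (m - (nA + (N-1) + nC) + 1) / real N))"
    using False unfolding ex_a_def Let_def j_def[symmetric] m_def[symmetric] nA_def[symmetric]
      N_def[symmetric] nC_def[symmetric] by simp
  have ee: "ex_exponent n = profile nA N nC m" using False
    unfolding ex_exponent_def j_def[symmetric] m_def[symmetric] nA_def[symmetric] N_def[symmetric]
      nC_def[symmetric] by simp
  have "real (m - (nA + (N-1) + nC) + 1) / real N \<le> 1" if "\<not> m < nA + (N-1) + nC"
    using mb that N1 by simp
  then show ?thesis unfolding ea ee profile_def by (auto simp: minus_divide_left max_def)
qed

lemma ex_a_exp: "ex_a n = exp (- ln 2 * ex_exponent n)"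
  by (simp add: ex_a_powr powr_def)

lemma profile_before: "m < nA \<Longrightarrow> profile nA N nC m = 0" by (simp add: profile_def)

lemma profile_up: "nA \<le> m \<Longrightarrow> m < nA + (N-1) \<Longrightarrow> profile nA N nC m = (real m - real nA + 1) / real N"
proof -
  assume a: "nA \<le> m" "m < nA + (N-1)"
  hence "profile nA N nC m = real (m - nA + 1) / real N" unfolding profile_def by (simp only: if_False if_True if_not_P if_P not_less) 
  thus ?thesis using a by (simp add: of_nat_diff)
qed

lemma profile_top: "nA + (N-1) \<le> m \<Longrightarrow> m < nA + (N-1) + nC \<Longrightarrow> profile nA N nC m = 1"
proof -
  assume a: "nA + (N-1) \<le> m" "m < nA + (N-1) + nC"
  hence "\<not> m < nA" "\<not> m < nA + (N-1)" by auto
  thus ?thesis unfolding profile_def using a(2) by (simp only: if_False if_True if_not_P if_P)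
qed

lemma profile_down:
  "N \<ge> 1 \<Longrightarrow> nA + (N-1) + nC \<le> m \<Longrightarrow> m \<le> nA + (N-1) + nC + (N - 1) \<Longrightarrow>
   profile nA N nC m = 1 - (real m - real (nA + (N-1) + nC) + 1) / real N"
proof -
  assume N: "N \<ge> 1" and m: "nA + (N-1) + nC \<le> m" "m \<le> nA + (N-1) + nC + (N - 1)"
  have r: "real (m - (nA + (N-1) + nC) + 1) = real m - real (nA + (N-1) + nC) + 1" using m by (simp add: of_nat_diff)
  have "m - (nA + (N-1) + nC) + 1 \<le> N" using m N by linarith
  hence "real (m - (nA + (N-1) + nC) + 1) \<le> real N" by linarith
  hence "1 - real (m - (nA + (N-1) + nC) + 1) / real N \<ge> 0" using N by (simp add: field_simps)
  moreover have "\<not> m < nA" "\<not> m < nA + (N-1)" "\<not> m < nA + (N-1) + nC" using m by auto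
  ultimately show ?thesis unfolding profile_def r[symmetric] by (simp only: if_False if_True if_not_P max_absorb2)
qed

lemma profile_after: "N \<ge> 1 \<Longrightarrow> nA + (N-1) + nC + N \<le> m \<Longrightarrow> profile nA N nC m = 0"
proof -
  assume N: "N \<ge> 1" and m: "nA + (N-1) + nC + N \<le> m"
  have "m - (nA + (N-1) + nC) + 1 \<ge> N" using m N by linarith
  hence "real (m - (nA + (N-1) + nC) + 1) \<ge> real N" by linarith
  hence "1 - real (m - (nA + (N-1) + nC) + 1) / real N \<le> 0" using N by (simp add: field_simps)
  moreover have "\<not> m < nA" "\<not> m < nA + (N-1)" "\<not> m < nA + (N-1) + nC" using m by auto
  ultimately show ?thesis unfolding profile_def by (simp only: if_False if_True if_not_P max_absorb1)
qed

definition profile_slope :: "nat \<Rightarrow> nat \<Rightarrow> nat \<Rightarrow> nat \<Rightarrow> real" where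
  "profile_slope nA N nC m = (if nA - 1 \<le> m \<and> m < nA + N - 1 then 1 / real N
     else if nA + (N-1) + nC - 1 \<le> m \<and> m < nA + (N-1) + nC + N - 1 then - 1 / real N else 0)"

lemma slope_up: "nA - 1 \<le> m \<Longrightarrow> m < nA + N - 1 \<Longrightarrow> profile_slope nA N nC m = 1 / real N"
  unfolding profile_slope_def by (simp only: if_P conj_absorb)

lemma slope_down:
  "\<not> (nA - 1 \<le> m \<and> m < nA + N - 1) \<Longrightarrow>
   nA + (N-1) + nC - 1 \<le> m \<Longrightarrow> m < nA + (N-1) + nC + N - 1
   \<Longrightarrow> profile_slope nA N nC m = - 1 / real N"
  unfolding profile_slope_def by (simp only: if_False if_True if_not_P) simp

lemma slope_zero:
  "\<not> (nA - 1 \<le> m \<and> m < nA + N - 1) \<Longrightarrow>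
   \<not> (nA + (N-1) + nC - 1 \<le> m \<and> m < nA + (N-1) + nC + N - 1)
   \<Longrightarrow> profile_slope nA N nC m = 0"
  unfolding profile_slope_def by (simp only: if_False if_True if_not_P)

lemma profile_increment:
  assumes nA: "nA \<ge> 2" and N: "N \<ge> 1" and nC: "nC \<ge> 1" and m: "m \<le> nA + (N-1) + nC + (N-1)"
  shows "profile nA N nC (m+1) - profile nA N nC m = profile_slope nA N nC m"
proof -
  define M2 where "M2 = nA + (N-1) + nC"
  have Nr: "real N > 0" using N by simp
  consider (a) "m + 1 < nA" | (b) "m + 1 = nA" | (c) "nA \<le> m" "m + 1 < nA + (N-1)"
    | (d) "nA \<le> m" "m + 1 = nA + (N-1)" | (e) "nA + (N-1) \<le> m" "m + 1 < M2"
    | (f) "nA + (N-1) \<le> m" "m + 1 = M2" | (g) "M2 \<le> m" "m + 1 \<le> M2 + (N - 1)" | (h) "m = M2 + (N - 1)"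
    using m N nC unfolding M2_def by linarith
  thus ?thesis
  proof cases
    case a
    have "profile_slope nA N nC m = 0" using a N nC unfolding M2_def by (intro slope_zero) linarith+
    thus ?thesis using a by (simp add: profile_before)
  next
    case b
    have e0: "profile nA N nC m = 0" using b by (intro profile_before) linarith
    have e1: "profile nA N nC (m+1) = 1 / real N"
    proof (cases "N = 1")
      case True
      hence "profile nA N nC (m+1) = 1" using b nC by (intro profile_top) linarith+
      thus ?thesis using True by simp
    next
      case False
      hence "profile nA N nC (m+1) = (real (m+1) - real nA + 1) / real N" using b N by (intro profile_up) linarith+
      thus ?thesis using b by simp
    qed
    have "profile_slope nA N nC m = 1 / real N" using b N by (intro slope_up) linarith+
    thus ?thesis using e0 e1 by simp
  next
    case c
    have "profile nA N nC (m+1) - profile nA N nC m = (real (m+1) - real nA + 1) / real N - (real m - real nA + 1) / real N"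
      using c profile_up[of nA "m+1" N nC] profile_up[of nA m N nC] by simp
    also have "\<dots> = 1 / real N" by (simp add: diff_divide_distrib[symmetric])
    finally show ?thesis using c N by (subst slope_up) linarith+
  next
    case d
    have "profile nA N nC (m+1) = 1" using d nC by (intro profile_top) linarith+
    moreover have "profile nA N nC m = (real m - real nA + 1) / real N" using d by (intro profile_up) linarith+
    moreover have "real m - real nA + 1 = real N - 1" using d N by linarith
    moreover have "profile_slope nA N nC m = 1 / real N" using d N by (intro slope_up) linarith+
    moreover have "1 - (real N - 1) / real N = 1 / real N" using Nr by (simp add: field_simps)
    ultimately show ?thesis by simp
  next
    case e
    have "profile nA N nC (m+1) = 1" "profile nA N nC m = 1" using e unfolding M2_def by (intro profile_top; linarith)+
    moreover have "profile_slope nA N nC m = 0" using e N nA unfolding M2_def by (intro slope_zero) linarith+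
    ultimately show ?thesis by simp
  next
    case f
    have "profile nA N nC m = 1" using f unfolding M2_def by (intro profile_top) linarith+
    moreover have "profile nA N nC (m+1) = 1 - (real (m+1) - real M2 + 1) / real N"
      using f N unfolding M2_def by (intro profile_down) linarith+
    moreover have "real (m+1) - real M2 + 1 = 1" using f by simp
    moreover have "profile_slope nA N nC m = - 1 / real N" using f N nC unfolding M2_def by (intro slope_down) linarith+
    ultimately show ?thesis by simp
  next
    case g
    have "profile nA N nC (m+1) - profile nA N nC m = (1 - (real (m+1) - real M2 + 1) / real N) - (1 - (real m - real M2 + 1) / real N)"
      using g N profile_down[of N nA nC "m+1"] profile_down[of N nA nC m] unfolding M2_def by simp
    also have "\<dots> = - 1 / real N" by (simp add: diff_divide_distrib[symmetric])
    finally show ?thesis using g N nC nA unfolding M2_def by (subst slope_down) linarith+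
  next
    case h
    have "profile nA N nC m = 1 - (real m - real M2 + 1) / real N" using h N unfolding M2_def by (intro profile_down) linarith+
    also have "\<dots> = 0" using h N Nr by (simp add: of_nat_diff)
    finally have "profile nA N nC m = 0" .
    moreover have "profile nA N nC (m+1) = 0" using h N unfolding M2_def by (intro profile_after) linarith+
    moreover have "profile_slope nA N nC m = 0" using h N nC nA unfolding M2_def by (intro slope_zero) linarith+
    ultimately show ?thesis by simp
  qed
qed

lemma ex_exponent_block:
  assumes j: "j \<ge> 1" and m: "m \<le> blen j + 1"
  shows "ex_exponent (bstart j + m) = profile (3^(j^2)) (j^6) (2^(j^2)) m"
proof (cases "m < blen j")
  case True
  have b1: "bstart j \<ge> 1" using bstart_ge[of j] j by simp
  have "blk (bstart j + m) = j" using True bstart_Suc[OF j] j by (intro blk_eq) auto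
  thus ?thesis using b1 by (simp add: ex_exponent_def)
next
  case False
  define k where "k = m - blen j"
  have k1: "k \<le> 1" using m False by (simp add: k_def)
  have n: "bstart j + m = bstart (Suc j) + k" using False bstart_Suc[OF j] by (simp add: k_def)
  have b1: "bstart (Suc j) \<ge> 1" using bstart_ge[of "Suc j"] by simp
  have "blk (bstart (Suc j) + k) = Suc j" using k1 bstart_Suc[of "Suc j"] blen_ge_2[of "Suc j"]
    by (intro blk_eq) auto
  hence lhs: "ex_exponent (bstart j + m) = profile (3^(Suc j^2)) (Suc j^6) (2^(Suc j^2)) k" using b1 n by (simp add: ex_exponent_def)
  have "(3::nat)^1 \<le> 3^(Suc j^2)" by (intro power_increasing) auto
  hence "(3::nat)^(Suc j^2) \<ge> 3" by simp
  hence "k < 3^(Suc j^2)" using k1 by linarith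
  hence l0: "ex_exponent (bstart j + m) = 0" using lhs by (simp add: profile_before)
  have N1: "j^6 \<ge> (1::nat)" using j by simp
  have r0: "profile (3^(j^2)) (j^6) (2^(j^2)) m = 0"
  proof (cases "m = blen j")
    case True
    have "profile (3^(j^2)) (j^6) (2^(j^2)) m = 1 - (real m - real (3^(j^2) + (j^6-1) + 2^(j^2)) + 1) / real (j^6)"
      using True N1 by (intro profile_down) (auto simp: blen_def)
    also have "\<dots> = 0"
    proof -
      define M2 where "M2 = 3^(j^2) + (j^6-1) + 2^(j^2)"
      have "m = M2 + (j^6 - 1)" using True by (simp add: blen_def M2_def)
      hence "real m = real M2 + real (j^6) - 1" using N1 by (simp add: of_nat_diff)
      thus ?thesis using N1 j unfolding M2_def[symmetric] by simp
    qed
    finally show ?thesis .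
  next
    case False
    hence "m = blen j + 1" using m \<open>\<not> m < blen j\<close> by simp
    thus ?thesis using N1 by (intro profile_after) (auto simp: blen_def)
  qed
  show ?thesis using l0 r0 by simp
qed

(* Increments of the exponent, and a summable weight that dominates the variation of the a_n:
   squares of the increments plus the jumps of the increment at the corners of the profile. *)
definition ex_slope :: "nat \<Rightarrow> real" where "ex_slope n = ex_exponent (n+1) - ex_exponent n"

definition slope_weight :: "nat \<Rightarrow> real" where
  "slope_weight n = (ex_slope n)^2 + (if ex_slope (n+1) = ex_slope n then 0 else \<bar>ex_slope n\<bar> + \<bar>ex_slope (n+1)\<bar>)"

definition profile_weight :: "nat \<Rightarrow> nat \<Rightarrow> nat \<Rightarrow> nat \<Rightarrow> real" where
  "profile_weight nA N nC m = (profile_slope nA N nC m)^2 + (if profile_slope nA N nC (m+1) = profile_slope nA N nC m then 0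
      else \<bar>profile_slope nA N nC m\<bar> + \<bar>profile_slope nA N nC (m+1)\<bar>)"

lemma slope_weight_nonneg: "slope_weight n \<ge> 0" by (simp add: slope_weight_def)

lemma slope_weight_block:
  assumes j: "j \<ge> 1" and m: "m < blen j"
  shows "slope_weight (bstart j + m) = profile_weight (3^(j^2)) (j^6) (2^(j^2)) m"
proof -
  have "(3::nat)^1 \<le> 3^(j^2)" using j by (intro power_increasing) (auto simp: Suc_le_eq)
  hence nA: "(3::nat)^(j^2) \<ge> 2" by simp
  have N: "j^6 \<ge> (1::nat)" using j by simp
  have nC: "(2::nat)^(j^2) \<ge> 1" by simp
  have e: "\<And>i. i \<le> blen j + 1 \<Longrightarrow> ex_exponent (bstart j + i) = profile (3^(j^2)) (j^6) (2^(j^2)) i"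
    using ex_exponent_block[OF j] by simp
  have ep: "\<And>i. i \<le> blen j \<Longrightarrow> ex_slope (bstart j + i) = profile_slope (3^(j^2)) (j^6) (2^(j^2)) i"
  proof -
    fix i assume i: "i \<le> blen j"
    have "ex_slope (bstart j + i) = profile (3^(j^2)) (j^6) (2^(j^2)) (i+1) - profile (3^(j^2)) (j^6) (2^(j^2)) i"
      unfolding ex_slope_def using e[of "i+1"] e[of i] i by (simp add: add.assoc)
    also have "\<dots> = profile_slope (3^(j^2)) (j^6) (2^(j^2)) i"
      using i nA N nC by (intro profile_increment) (auto simp: blen_def)
    finally show "ex_slope (bstart j + i) = profile_slope (3^(j^2)) (j^6) (2^(j^2)) i" .
  qed
  have "ex_slope (bstart j + m) = profile_slope (3^(j^2)) (j^6) (2^(j^2)) m" using ep m by simp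
  moreover have "ex_slope (bstart j + m + 1) = profile_slope (3^(j^2)) (j^6) (2^(j^2)) (m+1)"
    using ep[of "m+1"] m by (simp add: add.assoc)
  ultimately show ?thesis unfolding slope_weight_def profile_weight_def by simp
qed

lemma sum_if_le:
  fixes c :: real
  assumes "finite A" "c \<ge> 0" "finite S"
  shows "(\<Sum>m\<in>S. if m \<in> A then c else 0) \<le> c * card A"
proof -
  have "(\<Sum>m\<in>S. if m \<in> A then c else 0) = (\<Sum>m\<in>S \<inter> A. c)"
    using sum.inter_restrict[OF assms(3), of "\<lambda>_. c" A] by simp
  also have "\<dots> = c * card (S \<inter> A)" by simp
  also have "\<dots> \<le> c * card A" using assms by (intro mult_left_mono) (auto intro: card_mono)
  finally show ?thesis .
qed

(* The ramps, where the profile has nonzero slope, and the corners, where the slope may jump. *)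
definition ramp_set :: "nat \<Rightarrow> nat \<Rightarrow> nat \<Rightarrow> nat set" where
  "ramp_set nA N nC = {nA - 1..<nA + N - 1} \<union> {nA + (N-1) + nC - 1..<nA + (N-1) + nC + N - 1}"

definition corner_set :: "nat \<Rightarrow> nat \<Rightarrow> nat \<Rightarrow> nat set" where
  "corner_set nA N nC = {nA - 2, nA + N - 2, nA + (N-1) + nC - 2, nA + (N-1) + nC + N - 2}"

lemma slope_abs_le: "\<bar>profile_slope nA N nC m\<bar> \<le> 1 / real N"
  unfolding profile_slope_def by auto

lemma slope_sq_support:
  "(profile_slope nA N nC m)^2 \<le> (if m \<in> ramp_set nA N nC then 1 / real N^2 else 0)"
  unfolding profile_slope_def ramp_set_def by (auto simp: power_divide)

lemma slope_constant_off_corners: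
  assumes nA: "nA \<ge> 2" and N: "N \<ge> 1" and m: "m \<notin> corner_set nA N nC"
  shows "profile_slope nA N nC (m+1) = profile_slope nA N nC m"
proof -
  define M2 where "M2 = nA + (N-1) + nC"
  obtain k where k: "nA = k + 2" using nA by (metis add.commute le_add_diff_inverse)
  obtain N' where N': "N = N' + 1" using N by (metis add.commute le_add_diff_inverse)
  have M2e: "M2 = k + N' + nC + 2" unfolding M2_def k N' by simp
  have "m \<noteq> k" "m \<noteq> k + N' + 1" "m \<noteq> k + N' + nC" "m \<noteq> k + N' + nC + N' + 1"
    using m unfolding corner_set_def M2_def[symmetric] k N' M2e by auto
  then have p1: "(nA - 1 \<le> m+1 \<and> m+1 < nA + N - 1) = (nA - 1 \<le> m \<and> m < nA + N - 1)"
    and p2: "(M2 - 1 \<le> m+1 \<and> m+1 < M2 + N - 1) = (M2 - 1 \<le> m \<and> m < M2 + N - 1)"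
    unfolding k N' M2e by auto
  show ?thesis unfolding profile_slope_def M2_def[symmetric] p1 p2 ..
qed

lemma card_ramp_set: "card (ramp_set nA N nC) \<le> 2 * N"
proof -
  have "card (ramp_set nA N nC) \<le> card {nA - 1..<nA + N - 1}
      + card {nA + (N-1) + nC - 1..<nA + (N-1) + nC + N - 1}"
    unfolding ramp_set_def by (rule card_Un_le)
  also have "\<dots> \<le> N + N" by simp
  finally show ?thesis by simp
qed

lemma card_corner_set: "card (corner_set nA N nC) \<le> 4"
  unfolding corner_set_def using card_length[of "[nA - 2, nA + N - 2, nA + (N-1) + nC - 2, nA + (N-1) + nC + N - 2]"]
  by simp

(* The weight of one profile is at most 10/N: the ramps contribute 2N/N^2 and the four
   corners 4 * 2/N. *)
lemma profile_weight_sum: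
  assumes nA: "nA \<ge> 2" and N: "N \<ge> 1"
  shows "(\<Sum>m<L. profile_weight nA N nC m) \<le> 10 / real N"
proof -
  define U where "U = ramp_set nA N nC"
  define Cs where "Cs = corner_set nA N nC"
  have Nr: "real N \<ge> 1" using N by simp
  have jump: "(if profile_slope nA N nC (m+1) = profile_slope nA N nC m then 0
        else \<bar>profile_slope nA N nC m\<bar> + \<bar>profile_slope nA N nC (m+1)\<bar>)
      \<le> (if m \<in> Cs then 2 / real N else 0)" for m
    using slope_constant_off_corners[OF nA N, of m nC] slope_abs_le[of nA N nC m]
      slope_abs_le[of nA N nC "m+1"] by (auto simp: Cs_def)
  have "(\<Sum>m<L. profile_weight nA N nC m)
      \<le> (\<Sum>m<L. (if m \<in> U then 1 / real N^2 else 0) + (if m \<in> Cs then 2 / real N else 0))"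
    unfolding profile_weight_def U_def using slope_sq_support jump by (intro sum_mono add_mono) auto
  also have "\<dots> = (\<Sum>m<L. (if m \<in> U then 1 / real N^2 else 0)) + (\<Sum>m<L. (if m \<in> Cs then 2 / real N else 0))"
    by (rule sum.distrib)
  also have "\<dots> \<le> (1 / real N^2) * card U + (2 / real N) * card Cs"
    by (intro add_mono sum_if_le) (auto simp: U_def Cs_def ramp_set_def corner_set_def)
  also have "\<dots> \<le> (1 / real N^2) * (2 * real N) + (2 / real N) * 4"
  proof -
    have "real (card U) \<le> 2 * real N" using card_ramp_set[of nA N nC] unfolding U_def by linarith
    moreover have "real (card Cs) \<le> 4" using card_corner_set[of nA N nC] unfolding Cs_def by linarith
    ultimately show ?thesis using Nr by (intro add_mono mult_left_mono) auto
  qed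
  also have "\<dots> = 10 / real N" using Nr by (simp add: field_simps power2_eq_square)
  finally show ?thesis .
qed

lemma sum_split_nat: "(\<Sum>n<(a::nat)+b. f n) = (\<Sum>n<a. f n) + (\<Sum>m<b. f (a+m))"
  by (induction b) (simp_all add: add.assoc)

lemma slope_weight_partial_sum:
  assumes "J \<ge> 1"
  shows "(\<Sum>n<bstart J. slope_weight n) \<le> slope_weight 0 + 10 * (\<Sum>j<J. inverse (real j ^ 6))"
  using assms
proof (induction J rule: dec_induct)
  case base thus ?case by (simp add: bstart_def)
next
  case (step J)
  have J: "J \<ge> 1" using step by simp
  have "(\<Sum>n<bstart (Suc J). slope_weight n) = (\<Sum>n<bstart J. slope_weight n) + (\<Sum>m<blen J. slope_weight (bstart J + m))"
    using bstart_Suc[OF J] by (simp add: sum_split_nat)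
  also have "(\<Sum>m<blen J. slope_weight (bstart J + m)) = (\<Sum>m<blen J. profile_weight (3^(J^2)) (J^6) (2^(J^2)) m)"
    using slope_weight_block[OF J] by (intro sum.cong) auto
  also have "\<dots> \<le> 10 / real (J^6)"
  proof (rule profile_weight_sum)
    have "(3::nat)^1 \<le> 3^(J^2)" using J by (intro power_increasing) (auto simp: Suc_le_eq)
    thus "3^(J^2) \<ge> (2::nat)" by simp
    show "J^6 \<ge> (1::nat)" using J by simp
  qed
  also have "10 / real (J^6) = 10 * inverse (real J ^ 6)" by (simp add: divide_inverse)
  finally show ?case using step.IH by (simp add: algebra_simps)
qed

lemma slope_weight_summable: "summable slope_weight"
proof -
  define S6 where "S6 = suminf (\<lambda>j. inverse (real j ^ 6))"
  have s6: "summable (\<lambda>j. inverse (real j ^ 6) :: real)" by (rule inverse_power_summable) simp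
  show ?thesis
  proof (rule bounded_imp_summable)
    show "\<And>n. slope_weight n \<ge> 0" by (rule slope_weight_nonneg)
    fix n
    have "(\<Sum>k\<le>n. slope_weight k) = (\<Sum>k<Suc n. slope_weight k)" by (simp add: lessThan_Suc_atMost)
    also have "\<dots> \<le> (\<Sum>k<bstart (Suc n). slope_weight k)"
      using bstart_ge[of "Suc n"] slope_weight_nonneg by (intro sum_mono2) auto
    also have "\<dots> \<le> slope_weight 0 + 10 * (\<Sum>j<Suc n. inverse (real j ^ 6))" by (rule slope_weight_partial_sum) simp
    also have "(\<Sum>j<Suc n. inverse (real j ^ 6)) \<le> S6"
      unfolding S6_def using s6 by (intro sum_le_suminf) auto
    finally show "(\<Sum>k\<le>n. slope_weight k) \<le> slope_weight 0 + 10 * S6" by simp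
  qed
qed

lemma exp_lip:
  fixes s t :: real assumes "s \<ge> 0" "t \<ge> 0"
  shows "\<bar>exp (-s) - exp (-t)\<bar> \<le> \<bar>s - t\<bar>"
proof -
  have key: "exp (-s) - exp (-t) \<le> t - s" if "0 \<le> s" "s \<le> t" for s t :: real
  proof -
    have ee: "exp (-s) * exp (s - t) = exp (-t)" by (simp add: exp_add[symmetric])
    have "exp (-s) - exp (-t) = exp (-s) * (1 - exp (s - t))" by (simp add: right_diff_distrib ee)
    also have "\<dots> \<le> 1 * (t - s)"
    proof (rule mult_mono)
      show "exp (-s) \<le> 1" using that by simp
      show "1 - exp (s - t) \<le> t - s" using exp_ge_add_one_self[of "s - t"] by linarith
      show "0 \<le> 1 - exp (s - t)" using that by simp
    qed simp
    finally show ?thesis by simp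
  qed
  show ?thesis
  proof (cases "s \<le> t")
    case True
    have "exp (-t) \<le> exp (-s)" using True by simp
    thus ?thesis using key[OF assms(1) True] True by (simp add: abs_le_iff)
  next
    case False
    have "exp (-s) \<le> exp (-t)" using False by simp
    thus ?thesis using key[OF assms(2)] False by (simp add: abs_le_iff)
  qed
qed

lemma ln2_props: "0 < ln (2::real)" "ln (2::real) < 1" using ln_2_less_1 by auto

lemma ex_a_bounds: "1/2 \<le> ex_a n \<and> ex_a n \<le> 1"
proof -
  have e: "0 \<le> ex_exponent n" "ex_exponent n \<le> 1" using ex_exponent_range by auto
  have "ln 2 * ex_exponent n \<le> ln 2 * 1" using e ln2_props by (intro mult_left_mono) auto
  hence "exp (- ln 2) \<le> exp (- ln 2 * ex_exponent n)" by simp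
  moreover have "exp (- ln 2) = (1/2::real)" by (simp add: exp_minus)
  moreover have "exp (- ln 2 * ex_exponent n) \<le> 1" using e ln2_props by simp
  ultimately show ?thesis by (simp add: ex_a_exp)
qed

lemma ex_a_increment: "\<bar>ex_a (n+1) - ex_a n\<bar> \<le> \<bar>ex_slope n\<bar>"
proof -
  have e: "\<And>k. 0 \<le> ex_exponent k" using ex_exponent_range by auto
  have "\<bar>ex_a (n+1) - ex_a n\<bar> = \<bar>exp (-(ln 2 * ex_exponent (n+1))) - exp (-(ln 2 * ex_exponent n))\<bar>"
    by (simp add: ex_a_exp)
  also have "\<dots> \<le> \<bar>ln 2 * ex_exponent (n+1) - ln 2 * ex_exponent n\<bar>" using e ln2_props by (intro exp_lip) auto
  also have "\<dots> = ln 2 * \<bar>ex_slope n\<bar>"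
    using ln2_props by (simp add: ex_slope_def abs_mult right_diff_distrib[symmetric])
  also have "\<dots> \<le> 1 * \<bar>ex_slope n\<bar>" using ln2_props by (intro mult_right_mono) auto
  finally show ?thesis by simp
qed

lemma ex_a_sq_exp: "ex_a n ^ 2 = exp (- (2 * ln 2) * ex_exponent n)"
  by (simp add: ex_a_exp power2_eq_square exp_add[symmetric])

lemma ex_a_sq_increment: "\<bar>ex_a (n+1)^2 - ex_a n^2\<bar> \<le> 2 * \<bar>ex_slope n\<bar>"
proof -
  have e: "\<And>k. 0 \<le> ex_exponent k" using ex_exponent_range by auto
  have "\<bar>ex_a (n+1)^2 - ex_a n^2\<bar> = \<bar>exp (-((2*ln 2) * ex_exponent (n+1))) - exp (-((2*ln 2) * ex_exponent n))\<bar>"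
    by (simp add: ex_a_sq_exp)
  also have "\<dots> \<le> \<bar>(2*ln 2) * ex_exponent (n+1) - (2*ln 2) * ex_exponent n\<bar>" using e ln2_props by (intro exp_lip) auto
  also have "\<dots> = (2*ln 2) * \<bar>ex_slope n\<bar>"
    using ln2_props by (simp add: ex_slope_def abs_mult right_diff_distrib[symmetric])
  also have "\<dots> \<le> 2 * \<bar>ex_slope n\<bar>" using ln2_props by (intro mult_right_mono) auto
  finally show ?thesis by simp
qed

lemma geometric_second_diff:
  fixes b0 b1 b2 :: real
  assumes b0: "0 < b0" and geom: "b2 * b0 = b1^2"
  shows "\<bar>(b1 - b0) - (b2 - b1)\<bar> = (b1 - b0)^2 / b0"
proof -
  have "b2 = b1^2 / b0" using geom b0 by (simp add: field_simps)
  then have "(b1 - b0) - (b2 - b1) = -((b1 - b0)^2 / b0)" using b0 by (simp add: field_simps power2_eq_square)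
  then show ?thesis using b0 by simp
qed

(* Where the slope does not change, a_n^2 is locally geometric, so its second difference is
   quadratic in the slope. *)
lemma ex_a_sq_second_diff:
  assumes eq: "ex_slope (n+1) = ex_slope n"
  shows "\<bar>(ex_a (n+1)^2 - ex_a n^2) - (ex_a (n+2)^2 - ex_a (n+1)^2)\<bar> \<le> 16 * (ex_slope n)^2"
proof -
  define c :: real where "c = -(2*ln 2)"
  have "ex_exponent (n+2) + ex_exponent n = 2 * ex_exponent (n+1)"
    using eq by (simp add: ex_slope_def algebra_simps numeral_2_eq_2)
  then have "c * ex_exponent (n+2) + c * ex_exponent n = c * ex_exponent (n+1) + c * ex_exponent (n+1)"
    by (metis distrib_left mult_2)
  then have geom: "ex_a (n+2)^2 * ex_a n^2 = (ex_a (n+1)^2)^2"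
    unfolding ex_a_sq_exp c_def[symmetric] by (simp add: power2_eq_square flip: exp_add)
  have b0: "1/4 \<le> ex_a n^2"
    using sq_bounds ex_a_bounds by blast
  have "\<bar>(ex_a (n+1)^2 - ex_a n^2) - (ex_a (n+2)^2 - ex_a (n+1)^2)\<bar> = (ex_a (n+1)^2 - ex_a n^2)^2 / ex_a n^2"
    using b0 geom by (intro geometric_second_diff) auto
  also have "\<dots> \<le> (2 * \<bar>ex_slope n\<bar>)^2 / (1/4)"
    using b0 power_mono[OF ex_a_sq_increment[of n], of 2] by (intro frac_le) auto
  also have "\<dots> = 16 * (ex_slope n)^2" by (simp add: power2_eq_square)
  finally show ?thesis .
qed

lemma ex_variation_bound:
  "coef_variation (ex_a n) (ex_a (n+1)) (ex_a (n+2)) \<le> 18 * slope_weight n + slope_weight (n+1)"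
proof -
  define e0 where "e0 = ex_slope n"
  define e1 where "e1 = ex_slope (n+1)"
  have F0: "slope_weight n = e0^2 + (if e1 = e0 then 0 else \<bar>e0\<bar> + \<bar>e1\<bar>)"
    by (simp add: slope_weight_def e0_def e1_def)
  have F1: "e1^2 \<le> slope_weight (n+1)" by (simp add: slope_weight_def e1_def)
  have n2: "n + 2 = (n+1) + 1" by simp
  have hb0: "\<bar>ex_a (n+1) - ex_a n\<bar> \<le> \<bar>e0\<bar>" using ex_a_increment[of n] by (simp add: e0_def)
  have hb1: "\<bar>ex_a (n+2) - ex_a (n+1)\<bar> \<le> \<bar>e1\<bar>" unfolding n2 e1_def by (rule ex_a_increment)
  have t1: "(ex_a (n+1) - ex_a n)^2 \<le> e0^2"
    using power_mono[OF hb0, of 2] by simp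
  have t2: "\<bar>ex_a (n+1) - ex_a n\<bar>*\<bar>ex_a (n+2) - ex_a (n+1)\<bar> \<le> e0^2/2 + e1^2/2"
  proof -
    have "\<bar>ex_a (n+1) - ex_a n\<bar>*\<bar>ex_a (n+2) - ex_a (n+1)\<bar> \<le> \<bar>e0\<bar>*\<bar>e1\<bar>"
      using hb0 hb1 by (intro mult_mono) auto
    then show ?thesis using abs_mult_le_half_sumsq[of e0 e1] by (simp add: abs_mult add_divide_distrib)
  qed
  have t3: "\<bar>(ex_a (n+1)^2 - ex_a n^2) - (ex_a (n+2)^2 - ex_a (n+1)^2)\<bar> \<le> 16 * slope_weight n"
  proof (cases "e1 = e0")
    case True
    then show ?thesis using ex_a_sq_second_diff[of n] F0 by (simp add: e0_def e1_def)
  next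
    case False
    have "\<bar>(ex_a (n+1)^2 - ex_a n^2) - (ex_a (n+2)^2 - ex_a (n+1)^2)\<bar>
        \<le> \<bar>ex_a (n+1)^2 - ex_a n^2\<bar> + \<bar>ex_a (n+2)^2 - ex_a (n+1)^2\<bar>"
      by (rule abs_triangle_ineq4)
    also have "\<dots> \<le> 2*\<bar>e0\<bar> + 2*\<bar>e1\<bar>"
      using ex_a_sq_increment[of n] ex_a_sq_increment[of "n+1"] unfolding e0_def e1_def n2
      by (rule add_mono)
    also have "\<dots> \<le> 16 * slope_weight n"
      using F0 False zero_le_power2[of e0] by (simp add: algebra_simps)
    finally show ?thesis .
  qed
  have F0': "e0^2 \<le> slope_weight n" using F0 by simp
  have combine: "A + B + C \<le> 18*F + G"
    if "A \<le> y" "B \<le> y/2 + z/2" "C \<le> 16*F" "y \<le> F" "z \<le> G" "0 \<le> F" "0 \<le> G"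
    for A B C y z F G :: real
    using that by linarith
  show ?thesis unfolding coef_variation_def
    by (rule combine[OF t1 t2 t3 F0' F1 slope_weight_nonneg slope_weight_nonneg])
qed

lemma ex_variation_summable: "summable (\<lambda>n. coef_variation (ex_a n) (ex_a (n+1)) (ex_a (n+2)))"
proof (rule summable_comparison_test')
  have "summable (\<lambda>n. slope_weight (Suc n))"
    using slope_weight_summable by (simp only: summable_Suc_iff)
  then show "summable (\<lambda>n. 18 * slope_weight n + slope_weight (n+1))"
    using slope_weight_summable by (intro summable_add summable_mult) simp_all
next
  fix n :: nat
  have "0 \<le> coef_variation (ex_a n) (ex_a (n+1)) (ex_a (n+2))" by (simp add: coef_variation_def)
  then show "norm (coef_variation (ex_a n) (ex_a (n+1)) (ex_a (n+2))) \<le> 18 * slope_weight n + slope_weight (n+1)"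
    using ex_variation_bound[of n] by simp
qed

lemma ex_a_increment_tendsto: "(\<lambda>n. ex_a (n+1) - ex_a n) \<longlonglongrightarrow> 0"
proof (rule Lim_null_comparison)
  show "\<forall>\<^sub>F n in sequentially. norm (ex_a (n+1) - ex_a n) \<le> sqrt (slope_weight n)"
  proof (intro always_eventually allI)
    fix n
    have "sqrt (ex_slope n ^2) \<le> sqrt (slope_weight n)"
      by (rule real_sqrt_le_mono) (simp add: slope_weight_def)
    then show "norm (ex_a (n+1) - ex_a n) \<le> sqrt (slope_weight n)" using ex_a_increment[of n] by simp
  qed
  show "(\<lambda>n. sqrt (slope_weight n)) \<longlonglongrightarrow> 0"
    using tendsto_real_sqrt[OF summable_LIMSEQ_zero[OF slope_weight_summable]] by simp
qed

lemma compact_in_symmetric_interval: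
  fixes K :: "real set"
  assumes "compact K" and "K \<subseteq> {-1<..<1}"
  obtains r where "0 \<le> r" "r < 1" "\<And>x. x \<in> K \<Longrightarrow> \<bar>x\<bar> \<le> r"
proof (cases "K = {}")
  case True
  then show ?thesis using that[of 0] by simp
next
  case False
  have "compact (abs ` K)" using assms(1) by (intro compact_continuous_image continuous_intros)
  then obtain x0 where x0: "x0 \<in> K" and max: "\<And>x. x \<in> K \<Longrightarrow> \<bar>x\<bar> \<le> \<bar>x0\<bar>"
    using compact_attains_sup[of "abs ` K"] False by blast
  have "\<bar>x0\<bar> < 1" using x0 assms(2) by (auto simp: abs_less_iff)
  then show ?thesis using that[of "\<bar>x0\<bar>"] max by simp
qed

(* ex_u solves the recurrence in the form used by jacobi_solutions_bounded (a_n never vanishes). *)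
lemma ex_u_recurrence: "ex_a (n+1) * ex_u x \<theta> (n+2) = x * ex_u x \<theta> (n+1) - ex_a n * ex_u x \<theta> n"
proof -
  have "ex_a (n+1) \<noteq> 0" using ex_a_bounds[of "n+1"] by auto
  then show ?thesis by (simp add: numeral_2_eq_2)
qed

theorem theorem5p3:
  fixes K :: "real set"
  assumes "compact K" and "K \<subseteq> {-1<..<1}"
  shows "\<exists>C. \<forall>x\<in>K. \<forall>\<theta>. \<forall>n. \<bar>ex_u x \<theta> n\<bar> \<le> C"
proof -
  obtain r where r: "0 \<le> r" "r < 1" and K: "\<And>x. x \<in> K \<Longrightarrow> \<bar>x\<bar> \<le> r"
    using compact_in_symmetric_interval[OF assms] by blast
  obtain C where C: "\<forall>x u. \<bar>x\<bar> \<le> r \<longrightarrow> (\<forall>n. ex_a (n+1) * u (n+2) = x * u (n+1) - ex_a n * u n)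
      \<longrightarrow> (u 0)^2 + (u 1)^2 = 1 \<longrightarrow> (\<forall>n. \<bar>u n\<bar> \<le> C)"
    using jacobi_solutions_bounded[OF r ex_a_bounds ex_variation_summable ex_a_increment_tendsto]
    by blast
  have "\<bar>ex_u x \<theta> n\<bar> \<le> C" if "x \<in> K" for x \<theta> n
    using C K[OF that] ex_u_recurrence by simp
  then show ?thesis by blast
qed

end
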